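(* Let $p,q$ be distinct propositional letters, define $p^0:=q\looparrowright p$, $p^{n+1}:=p\to p^n$, and for $T\subseteq\omega\setminus\{0\}$ let $\Lambda_T:=\{q\looparrowright p^m:m\in T\}$. If $P$ and $T$ are non-empty subsets of $\omega\setminus\{0\}$ with $P\neq T$, then $\mathcal{F}\Lambda_P\neq\mathcal{F}\Lambda_T$.
   Context: Language: propositional letters $\Phi=\{p_0,p_1,\dots\}$; connectives $\neg$, $\lor,\wedge,\to,\leftrightarrow,\vartriangle,\looparrowright$; $\mathsf{FOR}$ the set of all formulas. A substitution is an endomorphism of the free formula algebra. An Epstein model is $\langle v,\mathfrak{R}\rangle$ with $v:\Phi\to\{0,1\}$ and $\mathfrak{R}\subseteq\mathsf{FOR}^2$; truth: letters via $v$, boolean connectives classical, $\vartriangle$: both arguments true and pair in $\mathfrak{R}$; $\looparrowright$: material implication true and pair in $\mathfrak{R}$. $\mathcal{F}$ is the least set containing all classical tautologies of the language and the axioms $(p\looparrowright q)\to(p\to q)$, $(p\vartriangle q)\leftrightarrow((p\looparrowright q)\wedge(p\wedge q))$, closed under uniform substitution and modus ponens; for $\Lambda\subseteq\mathsf{FOR}$, $\mathcal{F}\Lambda$ is the least set containing $\mathcal{F}\cup\Lambda$ closed under uniform substitution and modus ponens (equivalently, the formulas derivable by modus ponens from $\mathcal{F}$ and all substitution instances of members of $\Lambda$). $\mathcal{F}$ is sound and strongly complete for the class of all Epstein models. *)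

theory Defs
  imports Main
begin

datatype form =
    Var nat
  | Neg form
  | Or form form
  | And form form
  | Imp form form
  | Iff form form
  | Tri form form
  | Loop form form

primrec subst :: "(nat \<Rightarrow> form) \<Rightarrow> form \<Rightarrow> form" where
  "subst \<sigma> (Var n) = \<sigma> n"
| "subst \<sigma> (Neg A) = Neg (subst \<sigma> A)"
| "subst \<sigma> (Or A B) = Or (subst \<sigma> A) (subst \<sigma> B)"
| "subst \<sigma> (And A B) = And (subst \<sigma> A) (subst \<sigma> B)"
| "subst \<sigma> (Imp A B) = Imp (subst \<sigma> A) (subst \<sigma> B)"
| "subst \<sigma> (Iff A B) = Iff (subst \<sigma> A) (subst \<sigma> B)"
| "subst \<sigma> (Tri A B) = Tri (subst \<sigma> A) (subst \<sigma> B)"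
| "subst \<sigma> (Loop A B) = Loop (subst \<sigma> A) (subst \<sigma> B)"

text \<open>Classical evaluation: letters and formulas with main connective Tri or Loop
are treated as classical atoms (their truth value is given by w); the boolean
connectives are classical.\<close>

primrec ceval :: "(form \<Rightarrow> bool) \<Rightarrow> form \<Rightarrow> bool" where
  "ceval w (Var n) = w (Var n)"
| "ceval w (Neg A) = (\<not> ceval w A)"
| "ceval w (Or A B) = (ceval w A \<or> ceval w B)"
| "ceval w (And A B) = (ceval w A \<and> ceval w B)"
| "ceval w (Imp A B) = (ceval w A \<longrightarrow> ceval w B)"
| "ceval w (Iff A B) = (ceval w A \<longleftrightarrow> ceval w B)"
| "ceval w (Tri A B) = w (Tri A B)"
| "ceval w (Loop A B) = w (Loop A B)"

definition classical_taut :: "form \<Rightarrow> bool" where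
  "classical_taut A \<longleftrightarrow> (\<forall>w. ceval w A)"

inductive_set FL :: "form set \<Rightarrow> form set" for \<Lambda> :: "form set" where
  taut: "classical_taut A \<Longrightarrow> A \<in> FL \<Lambda>"
| ax1: "Imp (Loop (Var 0) (Var 1)) (Imp (Var 0) (Var 1)) \<in> FL \<Lambda>"
| ax2: "Iff (Tri (Var 0) (Var 1)) (And (Loop (Var 0) (Var 1)) (And (Var 0) (Var 1))) \<in> FL \<Lambda>"
| hyp: "A \<in> \<Lambda> \<Longrightarrow> A \<in> FL \<Lambda>"
| sub: "A \<in> FL \<Lambda> \<Longrightarrow> subst \<sigma> A \<in> FL \<Lambda>"
| mp: "A \<in> FL \<Lambda> \<Longrightarrow> Imp A B \<in> FL \<Lambda> \<Longrightarrow> B \<in> FL \<Lambda>"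

primrec ppow :: "nat \<Rightarrow> nat \<Rightarrow> nat \<Rightarrow> form" where
  "ppow p q 0 = Loop (Var q) (Var p)"
| "ppow p q (Suc n) = Imp (Var p) (ppow p q n)"

definition LambdaT :: "nat \<Rightarrow> nat \<Rightarrow> nat set \<Rightarrow> form set" where
  "LambdaT p q T = {Loop (Var q) (ppow p q m) | m. m \<in> T}"

end

theory Submission
  imports Defs
begin

text \<open>Consider the Epstein models whose relation contains every pair of true formulas
and every pair \<open>(A, A\<^sup>n)\<close> with \<open>n \<in> T\<close>, where \<open>A\<^sup>n\<close> is \<open>p\<^sup>n\<close> with \<open>q, p\<close> replaced
by arbitrary formulas \<open>A, C\<close>. This class is closed under substitution and validates
\<open>\<Lambda>\<^sub>T\<close>: for \<open>n > 0\<close> the pair \<open>(q, p\<^sup>n)\<close> is in the relation, and \<open>p\<^sup>n = p \<rightarrow> \<dots>\<close> is true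
when \<open>p\<close> is false, while for \<open>p, q\<close> true every tower over them is true. Hence the class
validates \<open>\<F>\<Lambda>\<^sub>T\<close>. For \<open>m \<notin> T\<close>, the model with all letters false and relation omitting
only \<open>(q, p\<^sup>m)\<close> belongs to the class and refutes \<open>q \<looparrowright> p\<^sup>m\<close>, which lies in \<open>\<F>\<Lambda>\<^sub>P\<close>
when \<open>m \<in> P\<close>.\<close>

primrec pow_form :: "form \<Rightarrow> form \<Rightarrow> nat \<Rightarrow> form" where
  "pow_form A C 0 = Loop A C"
| "pow_form A C (Suc n) = Imp C (pow_form A C n)"

lemma ppow_eq_pow_form: "ppow p q m = pow_form (Var q) (Var p) m"
  by (induction m) auto

lemma subst_pow_form: "subst \<sigma> (pow_form A C n) = pow_form (subst \<sigma> A) (subst \<sigma> C) n"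
  by (induction n) auto

lemma pow_form_eq_iff: "pow_form A C n = pow_form A' C' k \<longleftrightarrow> A = A' \<and> C = C' \<and> n = k"
proof (induction n arbitrary: k)
  case 0 then show ?case by (cases k) auto
next
  case (Suc n) then show ?case by (cases k) auto
qed

fun holds :: "(nat \<Rightarrow> bool) \<Rightarrow> (form \<times> form) set \<Rightarrow> form \<Rightarrow> bool" where
  "holds v R (Var n) = v n"
| "holds v R (Neg A) = (\<not> holds v R A)"
| "holds v R (Or A B) = (holds v R A \<or> holds v R B)"
| "holds v R (And A B) = (holds v R A \<and> holds v R B)"
| "holds v R (Imp A B) = (holds v R A \<longrightarrow> holds v R B)"
| "holds v R (Iff A B) = (holds v R A \<longleftrightarrow> holds v R B)"
| "holds v R (Tri A B) = (holds v R A \<and> holds v R B \<and> (A, B) \<in> R)"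
| "holds v R (Loop A B) = ((holds v R A \<longrightarrow> holds v R B) \<and> (A, B) \<in> R)"

lemma ceval_holds: "ceval (holds v R) A = holds v R A"
  by (induction A) auto

lemma classical_taut_holds: "classical_taut A \<Longrightarrow> holds v R A"
  by (metis ceval_holds classical_taut_def)

definition subst_rel :: "(nat \<Rightarrow> form) \<Rightarrow> (form \<times> form) set \<Rightarrow> (form \<times> form) set" where
  "subst_rel \<sigma> R = {(A, B). (subst \<sigma> A, subst \<sigma> B) \<in> R}"

lemma holds_subst:
  "holds v R (subst \<sigma> A) = holds (\<lambda>n. holds v R (\<sigma> n)) (subst_rel \<sigma> R) A"
  by (induction A) (auto simp: subst_rel_def)

lemma FL_sound:
  assumes subst_closed: "\<And>v R \<sigma>. K v R \<Longrightarrow> K (\<lambda>n. holds v R (\<sigma> n)) (subst_rel \<sigma> R)"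
    and valid: "\<And>A v R. A \<in> \<Lambda> \<Longrightarrow> K v R \<Longrightarrow> holds v R A"
    and "F \<in> FL \<Lambda>" "K v R"
  shows "holds v R F"
  using assms(3,4)
proof (induction arbitrary: v R rule: FL.induct)
  case (taut A) then show ?case by (simp add: classical_taut_holds)
next
  case (sub A \<sigma>) then show ?case by (simp add: holds_subst subst_closed)
qed (auto simp: valid)

definition tower_pairs :: "nat set \<Rightarrow> (form \<times> form) set" where
  "tower_pairs T = {(A, pow_form A C n) | A C n. n \<in> T}"

definition tower_model :: "nat set \<Rightarrow> (nat \<Rightarrow> bool) \<Rightarrow> (form \<times> form) set \<Rightarrow> bool" where
  "tower_model T v R \<longleftrightarrow>
     tower_pairs T \<subseteq> R \<and> (\<forall>A B. holds v R A \<and> holds v R B \<longrightarrow> (A, B) \<in> R)"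

lemma tower_model_subst:
  assumes "tower_model T v R"
  shows "tower_model T (\<lambda>n. holds v R (\<sigma> n)) (subst_rel \<sigma> R)"
proof -
  have "(A, B) \<in> subst_rel \<sigma> R" if "(A, B) \<in> tower_pairs T" for A B
  proof -
    from that obtain C n where "B = pow_form A C n" "n \<in> T"
      unfolding tower_pairs_def by blast
    then have "(subst \<sigma> A, subst \<sigma> B) \<in> tower_pairs T"
      unfolding tower_pairs_def by (auto simp: subst_pow_form)
    then show ?thesis
      using assms unfolding tower_model_def subst_rel_def by blast
  qed
  moreover have "(A, B) \<in> subst_rel \<sigma> R"
    if "holds (\<lambda>n. holds v R (\<sigma> n)) (subst_rel \<sigma> R) A"
       "holds (\<lambda>n. holds v R (\<sigma> n)) (subst_rel \<sigma> R) B" for A B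
  proof -
    have "holds v R (subst \<sigma> A)" "holds v R (subst \<sigma> B)"
      using that by (simp_all only: holds_subst)
    then show ?thesis
      using assms unfolding tower_model_def subst_rel_def by blast
  qed
  ultimately show ?thesis
    unfolding tower_model_def by auto
qed

lemma holds_pow_form:
  assumes "tower_model T v R" "holds v R A" "holds v R C"
  shows "holds v R (pow_form A C n)"
proof (induction n)
  case 0 then show ?case
    using assms unfolding tower_model_def by simp
qed (simp add: assms(3))

lemma tower_model_holds_LambdaT:
  assumes "0 \<notin> T" "tower_model T v R" "F \<in> LambdaT p q T"
  shows "holds v R F"
proof -
  obtain m where m: "m \<in> T" "F = Loop (Var q) (pow_form (Var q) (Var p) m)"
    using assms(3) by (auto simp: LambdaT_def ppow_eq_pow_form)
  then obtain k where k: "m = Suc k"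
    using assms(1) by (cases m) auto
  have "(Var q, pow_form (Var q) (Var p) m) \<in> R"
    using assms(2) m(1) by (auto simp: tower_model_def tower_pairs_def)
  moreover have "holds v R (Var q) \<longrightarrow> holds v R (pow_form (Var q) (Var p) m)"
    using k holds_pow_form[OF assms(2)] by simp
  ultimately show ?thesis
    using m(2) by simp
qed

lemma FL_LambdaT_sound:
  assumes "0 \<notin> T" "F \<in> FL (LambdaT p q T)" "tower_model T v R"
  shows "holds v R F"
  using FL_sound[OF tower_model_subst tower_model_holds_LambdaT[OF assms(1)] assms(2,3)] .

lemma LambdaT_in_FL: "m \<in> P \<Longrightarrow> Loop (Var q) (ppow p q m) \<in> FL (LambdaT p q P)"
  by (rule FL.hyp) (auto simp: LambdaT_def)

lemma LambdaT_notin_FL: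
  assumes "m \<notin> T" "0 \<notin> T"
  shows "Loop (Var q) (ppow p q m) \<notin> FL (LambdaT p q T)"
proof
  define R where "R = UNIV - {(Var q, pow_form (Var q) (Var p) m)}"
  have "tower_model T (\<lambda>_. False) R"
    using assms(1) by (auto simp: tower_model_def tower_pairs_def R_def pow_form_eq_iff)
  moreover assume "Loop (Var q) (ppow p q m) \<in> FL (LambdaT p q T)"
  ultimately have "holds (\<lambda>_. False) R (Loop (Var q) (ppow p q m))"
    using FL_LambdaT_sound assms(2) by blast
  then show False
    by (simp add: R_def ppow_eq_pow_form)
qed

theorem mainTheorem9:
  fixes p q :: nat and P T :: "nat set"
  assumes "p \<noteq> q"
    and "P \<noteq> {}" and "T \<noteq> {}"
    and "0 \<notin> P" and "0 \<notin> T"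
    and "P \<noteq> T"
  shows "FL (LambdaT p q P) \<noteq> FL (LambdaT p q T)"
proof -
  obtain m where "m \<in> P \<and> m \<notin> T \<or> m \<in> T \<and> m \<notin> P"
    using assms(6) by blast
  then show ?thesis
    using LambdaT_in_FL LambdaT_notin_FL assms(4,5) by metis
qed

end
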